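(* Let $m\ge1$ and let ${\bf d}^m=(d_1,\dots,d_m)$ be positive integers. Let $j\ge2$ be an integer, and order the $d_i$ so that $d_1,\dots,d_{k_j}$ are exactly those divisible by $j$ (with $0\le k_j\le m$), while $d_{k_j+1},\dots,d_m$ are not divisible by $j$. Put $s_m=\sum_{i=1}^m d_i$, $\pi_m=\prod_{i=1}^m d_i$, and let ${\bf d}^m_j=(d_1,\dots,d_{k_j},\,jd_{k_j+1},\dots,jd_m)$. Then for every integer $s$, $$W_j(s,{\bf d}^m)=\frac{j^{k_j-m}}{(m-1)!\,\pi_m}\sum_{r_{k_j+1}=0}^{j-1}\cdots\sum_{r_m=0}^{j-1} B^{(m)}_{m-1}\Big(s+s_m+\sum_{i=k_j+1}^m r_id_i,\ {\bf d}^m_j\Big)\,\Psi_j\Big(s+s_m+\sum_{i=k_j+1}^m r_id_i\Big),$$ where, if $k_j=m$, the multiple sum consists of the single term with empty sum $\sum_{i=k_j+1}^m r_id_i=0$.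
   Context: The restricted partition function $W(s,{\bf d}^m)$ is the number of partitions of $s$ into parts from $\{d_1,\dots,d_m\}$. For an integer $j\ge1$, the Sylvester wave $W_j(s,{\bf d}^m)$ is defined as the coefficient of $t^{-1}$ in the Laurent expansion in ascending powers of $t$ of $$F_j(s,t)=\sum_{\rho}\frac{\rho^{-s}e^{st}}{\prod_{k=1}^m\big(1-\rho^{d_k}e^{-d_kt}\big)},$$ the sum running over all primitive $j$-th roots of unity $\rho=e^{2\pi i n/j}$, $1\le n\le j$, $\gcd(n,j)=1$. (Then $W(s,{\bf d}^m)=\sum_j W_j(s,{\bf d}^m)$, the sum over all divisors $j$ of the $d_i$.) For an integer $q\ge1$ and nonzero numbers ${\bf e}=(e_1,\dots,e_q)$, the Bernoulli polynomials of higher order $B^{(q)}_n(x,{\bf e})$ are defined by $$\frac{e^{xt}\,t^q\prod_{i=1}^q e_i}{\prod_{i=1}^q (e^{e_it}-1)}=\sum_{n=0}^\infty B^{(q)}_n(x,{\bf e})\frac{t^n}{n!}.$$ The prime circulator is $\Psi_j(s)=\sum_{n}\exp(2\pi i n s/j)$, summed over $1\le n\le j$ with $\gcd(n,j)=1$. *)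

theory Defs
  imports "HOL-Complex_Analysis.Complex_Analysis" "HOL-Library.FuncSet"
begin

text \<open>Primitive j-th roots of unity are indexed by n with 1 <= n <= j, gcd(n,j)=1.\<close>
definition prim_idx :: "nat \<Rightarrow> nat set" where
  "prim_idx j = {n \<in> {1..j}. coprime n j}"

definition root_of :: "nat \<Rightarrow> nat \<Rightarrow> complex" where
  "root_of j n = exp (2 * of_real pi * \<i> * of_nat n / of_nat j)"

text \<open>The function F_j(s,t); the tuple d^m is d 1, ..., d m.\<close>
definition sylF :: "nat \<Rightarrow> nat \<Rightarrow> (nat \<Rightarrow> nat) \<Rightarrow> int \<Rightarrow> complex \<Rightarrow> complex" where
  "sylF j m d s t = (\<Sum>n\<in>prim_idx j.
      (root_of j n) powi (- s) * exp (of_int s * t) /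
      (\<Prod>k=1..m. (1 - (root_of j n) ^ (d k) * exp (- of_nat (d k) * t))))"

text \<open>Sylvester wave: coefficient of t^(-1) in the Laurent expansion at 0, i.e. the residue.\<close>
definition sylvester_wave :: "nat \<Rightarrow> nat \<Rightarrow> (nat \<Rightarrow> nat) \<Rightarrow> int \<Rightarrow> complex" where
  "sylvester_wave j m d s = residue (sylF j m d s) 0"

text \<open>Generating function of higher order Bernoulli polynomials, with its removable
  singularity at t = 0 filled in by the limit value 1.\<close>
definition ber_gen :: "nat \<Rightarrow> (nat \<Rightarrow> complex) \<Rightarrow> complex \<Rightarrow> complex \<Rightarrow> complex" where
  "ber_gen q e x t = (if t = 0 then 1 else
      exp (x * t) * t ^ q * (\<Prod>i=1..q. e i) / (\<Prod>i=1..q. (exp (e i * t) - 1)))"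

text \<open>B^(q)_n(x, e) = n-th Taylor coefficient times n!, i.e. the n-th derivative at 0.\<close>
definition higher_bernoulli :: "nat \<Rightarrow> nat \<Rightarrow> complex \<Rightarrow> (nat \<Rightarrow> complex) \<Rightarrow> complex" where
  "higher_bernoulli q n x e = (deriv ^^ n) (ber_gen q e x) 0"

definition prime_circ :: "nat \<Rightarrow> int \<Rightarrow> complex" where
  "prime_circ j s = (\<Sum>n\<in>prim_idx j. exp (2 * of_real pi * \<i> * of_nat n * of_int s / of_nat j))"

end

theory Submission
  imports Defs
begin

text \<open>For a primitive root \<open>\<rho> = exp \<theta>\<close> the substitution \<open>u = t - \<theta>\<close> turns the summand of
  \<open>F\<^sub>j(s,t)\<close> into \<open>exp (s u) / \<Prod>(1 - exp (-d\<^sub>i u))\<close>. Multiplying each factor with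
  \<open>j\<close> not dividing \<open>d\<^sub>i\<close> by the geometric sum \<open>\<Sum>r<j. exp (r d\<^sub>i u)\<close> replaces its denominator by
  \<open>exp (j d\<^sub>i u) - 1\<close>; all denominators are then invariant under \<open>u \<mapsto> u + \<theta>\<close>, so only the
  numerators see \<open>\<rho>\<close>, and summing over the primitive roots produces the prime circulators.
  What remains is \<open>t\<^sup>-\<^sup>m\<close> times a combination of generating functions of higher order
  Bernoulli polynomials for the tuple \<open>d\<^sup>m\<^sub>j\<close>, which are holomorphic at \<open>0\<close>, so the residue
  is their \<open>(m-1)\<close>-st Taylor coefficient.\<close>

definition scaled_degrees :: "nat \<Rightarrow> nat \<Rightarrow> (nat \<Rightarrow> nat) \<Rightarrow> nat \<Rightarrow> nat" where
  "scaled_degrees j k d i = (if i \<le> k then d i else j * d i)"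

definition wave_argument :: "nat \<Rightarrow> nat \<Rightarrow> (nat \<Rightarrow> nat) \<Rightarrow> int \<Rightarrow> (nat \<Rightarrow> nat) \<Rightarrow> int" where
  "wave_argument m k d s r = s + int (\<Sum>i=1..m. d i) + int (\<Sum>i=k+1..m. r i * d i)"

lemma tendsto_exp_mult_minus_one_over:
  fixes a :: complex
  shows "((\<lambda>t. (exp (a * t) - 1) / t) \<longlongrightarrow> a) (at 0)"
proof -
  have "((\<lambda>t. exp (a * t)) has_field_derivative a) (at 0)"
    by (auto intro!: derivative_eq_intros)
  thus ?thesis by (simp add: has_field_derivative_iff)
qed

lemma eventually_exp_mult_neq_one:
  fixes a :: complex
  assumes "a \<noteq> 0"
  shows "eventually (\<lambda>t. exp (a * t) \<noteq> 1) (at 0)"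
proof -
  have "eventually (\<lambda>t. (exp (a * t) - 1) / t \<noteq> 0) (at 0)"
    using tendsto_imp_eventually_ne[OF tendsto_exp_mult_minus_one_over assms] .
  thus ?thesis by (rule eventually_mono) auto
qed

lemma ber_gen_holomorphic_on:
  fixes e :: "nat \<Rightarrow> complex"
  assumes e0: "\<And>i. i \<in> {1..q} \<Longrightarrow> e i \<noteq> 0" and "open A"
    and ne: "\<And>t i. t \<in> A - {0} \<Longrightarrow> i \<in> {1..q} \<Longrightarrow> exp (e i * t) \<noteq> 1"
  shows "ber_gen q e x holomorphic_on A"
proof -
  define f where "f t = exp (x * t) * t ^ q * (\<Prod>i=1..q. e i) / (\<Prod>i=1..q. (exp (e i * t) - 1))"
    for t
  have holo: "f holomorphic_on A - {0}"
    unfolding f_def by (intro holomorphic_intros) (use ne in auto)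
  have f_eq: "f t = exp (x * t) * (\<Prod>i=1..q. e i) / (\<Prod>i=1..q. (exp (e i * t) - 1) / t)"
    if "t \<noteq> 0" for t
    unfolding f_def prod_dividef using that by (simp add: field_simps)
  have "((\<lambda>t. exp (x * t) * (\<Prod>i=1..q. e i) / (\<Prod>i=1..q. (exp (e i * t) - 1) / t)) \<longlongrightarrow>
        exp (x * 0) * (\<Prod>i=1..q. e i) / (\<Prod>i=1..q. e i)) (at 0)"
    using e0 by (intro tendsto_intros tendsto_exp_mult_minus_one_over) auto
  hence "(f \<longlongrightarrow> 1) (at 0)"
    using e0 by (simp add: Lim_transform_eventually eventually_at_filter f_eq)
  moreover have "ber_gen q e x = (\<lambda>t. if t = 0 then 1 else f t)"
    by (simp add: fun_eq_iff ber_gen_def f_def)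
  ultimately show ?thesis
    using removable_singularity[OF holo \<open>open A\<close>] by simp
qed

lemma higher_deriv_sum:
  fixes f :: "'i \<Rightarrow> complex \<Rightarrow> complex"
  assumes "finite I" "\<And>i. i \<in> I \<Longrightarrow> f i holomorphic_on A" "open A" "z \<in> A"
  shows "(deriv ^^ n) (\<lambda>w. \<Sum>i\<in>I. f i w) z = (\<Sum>i\<in>I. (deriv ^^ n) (f i) z)"
  using assms(1,2)
proof (induction I rule: finite_induct)
  case empty
  then show ?case by simp
next
  case (insert a I)
  have "(deriv ^^ n) (\<lambda>w. \<Sum>i\<in>insert a I. f i w) z
        = (deriv ^^ n) (\<lambda>w. f a w + (\<Sum>i\<in>I. f i w)) z"
    using insert by simp
  also have "\<dots> = (deriv ^^ n) (f a) z + (deriv ^^ n) (\<lambda>w. \<Sum>i\<in>I. f i w) z"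
    using insert assms(3,4) by (intro higher_deriv_add) (auto intro!: holomorphic_on_sum)
  finally show ?case using insert by simp
qed

lemma residue_sum_over_power:
  fixes f :: "'i \<Rightarrow> complex \<Rightarrow> complex"
  assumes "finite I" "open A" "0 \<in> A" "\<And>i. i \<in> I \<Longrightarrow> f i holomorphic_on A"
  shows "residue (\<lambda>z. (\<Sum>i\<in>I. f i z) / z ^ Suc n) 0 = (\<Sum>i\<in>I. (deriv ^^ n) (f i) 0) / fact n"
proof -
  have "(\<lambda>z. \<Sum>i\<in>I. f i z) holomorphic_on A"
    using assms(4) by (rule holomorphic_on_sum)
  from residue_holomorphic_over_power'[OF assms(2,3) this]
  show ?thesis by (simp add: higher_deriv_sum[OF assms(1,4,2,3)])
qed

lemma inverse_one_minus_exp_neg_geometric: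
  fixes z :: complex
  assumes "j \<ge> 1" "exp (of_nat j * z) \<noteq> 1"
  shows "1 / (1 - exp (- z)) = exp z * (\<Sum>r<j. exp (of_nat r * z)) / (exp (of_nat j * z) - 1)"
proof -
  define y where "y = exp z"
  have pow: "exp (of_nat n * z) = y ^ n" for n
    by (simp add: y_def exp_of_nat_mult)
  have "y \<noteq> 0" "y ^ j \<noteq> 1"
    using assms(2) by (auto simp: y_def pow)
  then have "y \<noteq> 1" by auto
  have "1 / (1 - exp (- z)) = y / (y - 1)"
    using \<open>y \<noteq> 0\<close> \<open>y \<noteq> 1\<close> by (simp add: y_def exp_minus field_simps)
  also have "\<dots> = y * ((y ^ j - 1) / (y - 1)) / (y ^ j - 1)"
    using \<open>y ^ j \<noteq> 1\<close> by simp
  also have "\<dots> = y * (\<Sum>r<j. y ^ r) / (y ^ j - 1)"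
    by (simp add: geometric_sum[OF \<open>y \<noteq> 1\<close>])
  finally show ?thesis
    by (simp only: pow y_def)
qed

lemma exp_div_prod_one_minus_exp_expand:
  fixes u :: complex
  assumes "k \<le> m" "j \<ge> 1"
    and ne: "\<And>i. i \<in> {1..m} \<Longrightarrow> exp (of_nat (scaled_degrees j k d i) * u) \<noteq> 1"
  shows "exp (of_int s * u) / (\<Prod>i=1..m. (1 - exp (- of_nat (d i) * u))) =
    (\<Sum>r\<in>PiE {k+1..m} (\<lambda>_. {0..<j}). exp (of_int (wave_argument m k d s r) * u))
      / (\<Prod>i=1..m. (exp (of_nat (scaled_degrees j k d i) * u) - 1))"
proof -
  define M where "M i = (if i \<le> k then 1 else \<Sum>r<j. exp (of_nat r * (of_nat (d i) * u)))" for i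
  have factor: "1 / (1 - exp (- of_nat (d i) * u))
      = exp (of_nat (d i) * u) * M i / (exp (of_nat (scaled_degrees j k d i) * u) - 1)"
    if "i \<in> {1..m}" for i
  proof (cases "i \<le> k")
    case True
    then show ?thesis
      using inverse_one_minus_exp_neg_geometric[of 1 "of_nat (d i) * u"] ne[OF that]
      by (simp add: M_def scaled_degrees_def)
  next
    case False
    then show ?thesis
      using inverse_one_minus_exp_neg_geometric[of j "of_nat (d i) * u"] ne[OF that] assms(2)
      by (simp add: M_def scaled_degrees_def mult.assoc)
  qed
  have "(\<Prod>i=1..m. M i) = (\<Prod>i=k+1..m. \<Sum>r\<in>{0..<j}. exp (of_nat r * (of_nat (d i) * u)))"
    by (subst prod.mono_neutral_right[of "{1..m}" "{k+1..m}"]) (auto simp: M_def atLeast0LessThan)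
  also have "\<dots> = (\<Sum>r\<in>PiE {k+1..m} (\<lambda>_. {0..<j}).
      \<Prod>i=k+1..m. exp (of_nat (r i) * (of_nat (d i) * u)))"
    by (rule prod_sum_PiE) auto
  finally have M: "(\<Prod>i=1..m. M i) = (\<Sum>r\<in>PiE {k+1..m} (\<lambda>_. {0..<j}).
      exp (of_nat (\<Sum>i=k+1..m. r i * d i) * u))"
    by (simp add: exp_sum sum_distrib_right mult.assoc)
  have X: "exp (of_int (wave_argument m k d s r) * u)
      = exp (of_int s * u) * (\<Prod>i=1..m. exp (of_nat (d i) * u)) * exp (of_nat (\<Sum>i=k+1..m. r i * d i) * u)"
    for r
    by (simp add: wave_argument_def sum_distrib_right distrib_right exp_add exp_sum mult.assoc)
  have "exp (of_int s * u) / (\<Prod>i=1..m. (1 - exp (- of_nat (d i) * u)))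
      = exp (of_int s * u) * (\<Prod>i=1..m. 1 / (1 - exp (- of_nat (d i) * u)))"
    by (simp add: prod_dividef)
  also have "\<dots> = exp (of_int s * u) * (\<Prod>i=1..m. exp (of_nat (d i) * u)) * (\<Prod>i=1..m. M i)
      / (\<Prod>i=1..m. (exp (of_nat (scaled_degrees j k d i) * u) - 1))"
    by (subst prod.cong[OF refl factor]) (simp_all add: prod_dividef prod.distrib)
  finally show ?thesis
    unfolding M X by (simp add: sum_distrib_left sum_divide_distrib mult.assoc)
qed

lemma exp_mult_shift_root_angle:
  fixes t :: complex
  assumes "j dvd c"
  shows "exp (of_nat c * (t - 2 * of_real pi * \<i> * of_nat n / of_nat j)) = exp (of_nat c * t)"
proof (cases "j = 0")
  case True
  with assms show ?thesis by simp
next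
  case False
  from assms obtain q where "c = j * q" by blast
  with False have "of_nat c * (t - 2 * of_real pi * \<i> * of_nat n / of_nat j)
      = of_nat c * t + \<i> * (of_int (- int (q * n)) * (of_real pi * 2))"
    by (simp add: field_simps)
  then show ?thesis by (simp only: exp_plus_2pin)
qed

lemma sylF_summand_expansion:
  fixes t :: complex
  assumes "k \<le> m" "j \<ge> 1" and dvd: "\<forall>i\<in>{1..k}. j dvd d i"
    and ne: "\<And>i. i \<in> {1..m} \<Longrightarrow> exp (of_nat (scaled_degrees j k d i) * t) \<noteq> 1"
  shows "root_of j n powi (- s) * exp (of_int s * t) /
      (\<Prod>i=1..m. (1 - root_of j n ^ d i * exp (- of_nat (d i) * t))) =
    (\<Sum>r\<in>PiE {k+1..m} (\<lambda>_. {0..<j}).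
       root_of j n powi (- wave_argument m k d s r) * exp (of_int (wave_argument m k d s r) * t))
      / (\<Prod>i=1..m. (exp (of_nat (scaled_degrees j k d i) * t) - 1))"
proof -
  define \<theta> where "\<theta> = 2 * of_real pi * \<i> * of_nat n / (of_nat j :: complex)"
  have root: "root_of j n powi x = exp (of_int x * \<theta>)" for x
    unfolding root_of_def \<theta>_def [symmetric] by (rule exp_power_int)
  have root_pow: "root_of j n ^ l = exp (of_nat l * \<theta>)" for l
    unfolding root_of_def \<theta>_def [symmetric] by (rule exp_of_nat_mult [symmetric])
  have shift: "exp (of_nat (scaled_degrees j k d i) * (t - \<theta>))
      = exp (of_nat (scaled_degrees j k d i) * t)" if "i \<in> {1..m}" for i
    unfolding \<theta>_def using that dvd
    by (intro exp_mult_shift_root_angle) (auto simp: scaled_degrees_def)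
  have "root_of j n powi (- s) * exp (of_int s * t) /
      (\<Prod>i=1..m. (1 - root_of j n ^ d i * exp (- of_nat (d i) * t)))
      = exp (of_int s * (t - \<theta>)) / (\<Prod>i=1..m. (1 - exp (- of_nat (d i) * (t - \<theta>))))"
    unfolding root root_pow by (simp add: algebra_simps flip: exp_add)
  also have "\<dots> = (\<Sum>r\<in>PiE {k+1..m} (\<lambda>_. {0..<j}). exp (of_int (wave_argument m k d s r) * (t - \<theta>)))
      / (\<Prod>i=1..m. (exp (of_nat (scaled_degrees j k d i) * (t - \<theta>)) - 1))"
    using assms(1,2) by (rule exp_div_prod_one_minus_exp_expand) (simp add: shift ne)
  also have "\<dots> = (\<Sum>r\<in>PiE {k+1..m} (\<lambda>_. {0..<j}).
       root_of j n powi (- wave_argument m k d s r) * exp (of_int (wave_argument m k d s r) * t))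
      / (\<Prod>i=1..m. (exp (of_nat (scaled_degrees j k d i) * t) - 1))"
  proof -
    have "(\<Prod>i=1..m. (exp (of_nat (scaled_degrees j k d i) * (t - \<theta>)) - 1))
        = (\<Prod>i=1..m. (exp (of_nat (scaled_degrees j k d i) * t) - 1))"
      by (rule prod.cong) (simp_all add: shift)
    moreover have "exp (of_int x * (t - \<theta>)) = root_of j n powi (- x) * exp (of_int x * t)" for x
      unfolding root by (simp add: algebra_simps flip: exp_add)
    ultimately show ?thesis by simp
  qed
  finally show ?thesis .
qed

lemma sum_prim_idx_root_of_powi:
  assumes "j \<ge> 2"
  shows "(\<Sum>n\<in>prim_idx j. root_of j n powi (- x)) = prime_circ j x"
proof -
  have less: "n < j" if "n \<in> prim_idx j" for n
    using that assms by (auto simp: prim_idx_def le_less)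
  have reflect: "j - (j - n) = n" "j - n \<in> prim_idx j" if "n \<in> prim_idx j" for n
    using less [OF that] that by (auto simp: prim_idx_def coprime_iff_gcd_eq_1 gcd_diff2_nat)
  have summand: "exp (2 * of_real pi * \<i> * of_nat (j - n) * of_int x / of_nat j) = root_of j n powi (- x)"
    if "n \<in> prim_idx j" for n
  proof -
    have diff: "of_nat (j - n) = (of_nat j - of_nat n :: complex)"
      using less [OF that] by (simp add: of_nat_diff)
    have "2 * of_real pi * \<i> * of_nat (j - n) * of_int x / of_nat j
        = - of_int x * (2 * of_real pi * \<i> * of_nat n / of_nat j) + \<i> * (of_int x * (of_real pi * 2))"
      unfolding diff using assms by (simp add: field_simps)
    then show ?thesis
      by (simp only: root_of_def exp_power_int of_int_minus exp_plus_2pin)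
  qed
  show ?thesis
    unfolding prime_circ_def
    by (rule sum.reindex_bij_witness [where i = "\<lambda>n. j - n" and j = "\<lambda>n. j - n"])
      (use reflect summand in blast)+
qed

lemma sylF_eq_sum_ber_gen:
  fixes t :: complex
  assumes "k \<le> m" "j \<ge> 2" "\<forall>i\<in>{1..k}. j dvd d i" "t \<noteq> 0"
    and ne: "\<And>i. i \<in> {1..m} \<Longrightarrow> exp (of_nat (scaled_degrees j k d i) * t) \<noteq> 1"
  shows "sylF j m d s t =
    (\<Sum>r\<in>PiE {k+1..m} (\<lambda>_. {0..<j}).
       prime_circ j (wave_argument m k d s r) / (\<Prod>i=1..m. of_nat (scaled_degrees j k d i)) *
       ber_gen m (\<lambda>i. of_nat (scaled_degrees j k d i)) (of_int (wave_argument m k d s r)) t) / t ^ m"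
proof -
  define e :: "nat \<Rightarrow> complex" where "e = (\<lambda>i. of_nat (scaled_degrees j k d i))"
  define X where "X = wave_argument m k d s"
  define R where "R = PiE {k+1..m} (\<lambda>_. {0..<j})"
  define D where "D = (\<Prod>i=1..m. (exp (e i * t) - 1))"
  have "D \<noteq> 0" "(\<Prod>i=1..m. e i) \<noteq> 0"
    using ne by (force simp: D_def e_def)+
  have "sylF j m d s t = (\<Sum>n\<in>prim_idx j. \<Sum>r\<in>R. root_of j n powi (- X r) * exp (of_int (X r) * t) / D)"
    unfolding sylF_def D_def e_def X_def R_def
    using sylF_summand_expansion [OF assms(1) _ assms(3) ne] assms(2)
    by (simp add: sum_divide_distrib)
  also have "\<dots> = (\<Sum>r\<in>R. exp (of_int (X r) * t) / D * (\<Sum>n\<in>prim_idx j. root_of j n powi (- X r)))"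
    by (subst sum.swap) (simp add: sum_distrib_left mult_ac)
  also have "\<dots> = (\<Sum>r\<in>R. prime_circ j (X r) / (\<Prod>i=1..m. e i) * ber_gen m e (of_int (X r)) t) / t ^ m"
    unfolding sum_divide_distrib sum_prim_idx_root_of_powi [OF assms(2)]
    using \<open>t \<noteq> 0\<close> \<open>D \<noteq> 0\<close> \<open>(\<Prod>i=1..m. e i) \<noteq> 0\<close>
    by (intro sum.cong refl) (simp add: ber_gen_def D_def field_simps)
  finally show ?thesis
    by (simp only: e_def X_def R_def)
qed

lemma prod_scaled_degrees:
  assumes "k \<le> m"
  shows "(\<Prod>i=1..m. scaled_degrees j k d i) = j ^ (m - k) * (\<Prod>i=1..m. d i)"
proof -
  have split: "prod f {1..m} = prod f {1..k} * prod f {k+1..m}" for f :: "nat \<Rightarrow> nat"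
    using assms by (subst prod.union_disjoint [symmetric]) (auto intro: prod.cong)
  have "(\<Prod>i=1..m. scaled_degrees j k d i) = (\<Prod>i=1..k. d i) * (\<Prod>i=k+1..m. j * d i)"
    unfolding split by (intro arg_cong2 [where f = "(*)"] prod.cong) (auto simp: scaled_degrees_def)
  also have "\<dots> = j ^ (m - k) * (\<Prod>i=1..m. d i)"
    unfolding split [of d] prod.distrib by simp
  finally show ?thesis .
qed

lemma sylvester_wave_eq_sum_higher_bernoulli:
  assumes "m \<ge> 1" "\<forall>i\<in>{1..m}. d i > 0" "j \<ge> 2" "k \<le> m" "\<forall>i\<in>{1..k}. j dvd d i"
  shows "sylvester_wave j m d s =
    (\<Sum>r\<in>PiE {k+1..m} (\<lambda>_. {0..<j}).
       prime_circ j (wave_argument m k d s r) / (\<Prod>i=1..m. of_nat (scaled_degrees j k d i)) *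
       higher_bernoulli m (m - 1) (of_int (wave_argument m k d s r))
         (\<lambda>i. of_nat (scaled_degrees j k d i))) / fact (m - 1)"
proof -
  define e :: "nat \<Rightarrow> complex" where "e = (\<lambda>i. of_nat (scaled_degrees j k d i))"
  define X where "X = wave_argument m k d s"
  define R where "R = PiE {k+1..m} (\<lambda>_. {0..<j})"
  define c where "c r = prime_circ j (X r) / (\<Prod>i=1..m. e i)" for r
  have e0: "e i \<noteq> 0" if "i \<in> {1..m}" for i
    using assms(2,3) that by (simp add: e_def scaled_degrees_def)
  have "eventually (\<lambda>t. \<forall>i\<in>{1..m}. exp (e i * t) \<noteq> 1) (at 0)"
    using e0 by (intro eventually_ball_finite ballI eventually_exp_mult_neq_one) auto
  then obtain \<rho> where "\<rho> > 0"
    and \<rho>: "\<And>t i. t \<in> ball 0 \<rho> - {0} \<Longrightarrow> i \<in> {1..m} \<Longrightarrow> exp (e i * t) \<noteq> 1"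
    unfolding eventually_at by (auto simp: dist_commute)
  have holo: "ber_gen m e x holomorphic_on ball 0 \<rho>" for x
    using e0 \<rho> by (intro ber_gen_holomorphic_on) auto
  have "eventually (\<lambda>t. t \<in> ball 0 \<rho> - {0}) (at 0)"
    using \<open>\<rho> > 0\<close> by (simp add: eventually_at dist_commute) blast
  then have "eventually (\<lambda>t. sylF j m d s t
      = (\<Sum>r\<in>R. c r * ber_gen m e (of_int (X r)) t) / t ^ Suc (m - 1)) (at 0)"
    by (rule eventually_mono)
      (use sylF_eq_sum_ber_gen [of k m j d _ s] assms \<rho> in \<open>simp add: c_def e_def X_def R_def\<close>)
  then have "sylvester_wave j m d s
      = residue (\<lambda>t. (\<Sum>r\<in>R. c r * ber_gen m e (of_int (X r)) t) / t ^ Suc (m - 1)) 0"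
    unfolding sylvester_wave_def by (rule residue_cong) simp
  also have "\<dots> = (\<Sum>r\<in>R. (deriv ^^ (m - 1)) (\<lambda>t. c r * ber_gen m e (of_int (X r)) t) 0) / fact (m - 1)"
    using \<open>\<rho> > 0\<close> unfolding R_def
    by (intro residue_sum_over_power [where A = "ball 0 \<rho>"] finite_PiE holomorphic_intros holo) auto
  also have "\<dots> = (\<Sum>r\<in>R. c r * higher_bernoulli m (m - 1) (of_int (X r)) e) / fact (m - 1)"
    using \<open>\<rho> > 0\<close> unfolding higher_bernoulli_def by (simp add: higher_deriv_cmult [OF holo])
  finally show ?thesis
    by (simp only: c_def X_def R_def e_def)
qed

theorem mainTheorem2:
  fixes m j k :: nat and d :: "nat \<Rightarrow> nat" and s :: int
  assumes "m \<ge> 1"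
    and "\<forall>i\<in>{1..m}. d i > 0"
    and "j \<ge> 2"
    and "k \<le> m"
    and "\<forall>i\<in>{1..k}. j dvd d i"
    and "\<forall>i\<in>{k+1..m}. \<not> j dvd d i"
  shows "sylvester_wave j m d s =
    (of_nat j) powi (int k - int m) / (fact (m - 1) * of_nat (\<Prod>i=1..m. d i)) *
    (\<Sum>r\<in>PiE {k+1..m} (\<lambda>_. {0..<j}).
       higher_bernoulli m (m - 1)
         (of_int (s + int (\<Sum>i=1..m. d i) + int (\<Sum>i=k+1..m. r i * d i)))
         (\<lambda>i. if i \<le> k then of_nat (d i) else of_nat (j * d i)) *
       prime_circ j (s + int (\<Sum>i=1..m. d i) + int (\<Sum>i=k+1..m. r i * d i)))"
proof -
  have "(\<Prod>i=1..m. of_nat (scaled_degrees j k d i) :: complex)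
      = of_nat j ^ (m - k) * of_nat (\<Prod>i=1..m. d i)"
    unfolding of_nat_prod [symmetric] prod_scaled_degrees [OF assms(4)] by simp
  moreover have "(of_nat j :: complex) powi (int k - int m) = inverse (of_nat j ^ (m - k))"
    using assms(4) by (simp add: power_int_def nat_diff_distrib power_inverse)
  ultimately have "sylvester_wave j m d s =
    (of_nat j) powi (int k - int m) / (fact (m - 1) * of_nat (\<Prod>i=1..m. d i)) *
    (\<Sum>r\<in>PiE {k+1..m} (\<lambda>_. {0..<j}).
       higher_bernoulli m (m - 1) (of_int (wave_argument m k d s r))
         (\<lambda>i. of_nat (scaled_degrees j k d i)) *
       prime_circ j (wave_argument m k d s r))"
    using sylvester_wave_eq_sum_higher_bernoulli [OF assms(1-5)]
    by (simp add: sum_divide_distrib sum_distrib_left divide_inverse inverse_mult_distrib mult_ac)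
  then show ?thesis
    by (simp only: wave_argument_def scaled_degrees_def if_distrib [of of_nat])
qed

end
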